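(* Let $\mathcal{B}$ be any unicast index coding problem with receivers $u_1,\dots,u_n$ and demand sets $W_1,\dots,W_n$, and let $G$ be its equivalent single unicast problem (ESUP). Then $$\beta^*_G\big(\max_i |W_i|\big)\le \beta^*_{\mathcal{B}}(1)\le \beta^*_G(1).$$
   Context: Index coding model. A unicast index coding problem has $n$ receivers $u_1,\dots,u_n$ and $N$ messages $\mathbf{x}_1,\dots,\mathbf{x}_N$, each a vector in $\mathcal{A}^m$ for a finite alphabet $\mathcal{A}$ and a positive integer $m$ (all messages have the same length). Receiver $u_i$ demands $\mathbf{x}_j$, $j\in W_i$, and knows $\mathbf{x}_j$, $j\in K_i$, where $W_i,K_i\subseteq[N]$, $W_i\cap K_i=\emptyset$, the $W_i$ are pairwise disjoint and every message is demanded by exactly one receiver. A single unicast problem is the case where every receiver demands exactly one message ($n=N$). An index code consists of an encoder mapping the messages to a codeword $\mathbf{c}\in\mathcal{A}^\ell$, subsets $R_i\subseteq[\ell]$ (receiver $u_i$ observes only $\mathbf{c}_{R_i}$), and decoders at each $u_i$ mapping $(\mathbf{c}_{R_i},\mathbf{x}_{K_i})$ to $\mathbf{x}_{W_i}$; it is valid if every receiver decodes correctly for all message values. Broadcast rate $\beta=\ell/m$; locality at $u_i$ is $r_i=|R_i|/(m|W_i|)$; locality of the code is $r=\max_i r_i$. For a problem $\mathcal{P}$, $\beta^*_{\mathcal{P}}(r)$ is the infimum of rates of valid index codes, over all $m\ge1$, with locality at most $r$. ESUP: given $\mathcal{B}$, its ESUP is the single unicast problem with the same $N$ messages and $N=\sum_i|W_i|$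 receivers: for each $u_i$ and each $j\in W_i$ there is one receiver that demands only $\mathbf{x}_j$ and has side information $\mathbf{x}_{K_i}$. *)

theory Defs
  imports Complex_Main
begin

text \<open>Messages are indexed by j < N, receivers by i < n; receiver i demands the
messages in W i and knows the messages in K i.\<close>

definition unicast_problem :: "nat \<Rightarrow> nat \<Rightarrow> (nat \<Rightarrow> nat set) \<Rightarrow> (nat \<Rightarrow> nat set) \<Rightarrow> bool" where
  "unicast_problem N n W K \<longleftrightarrow>
     (\<forall>i<n. W i \<subseteq> {..<N} \<and> K i \<subseteq> {..<N} \<and> W i \<inter> K i = {} \<and> W i \<noteq> {}) \<and>
     (\<forall>i<n. \<forall>i'<n. i \<noteq> i' \<longrightarrow> W i \<inter> W i' = {}) \<and>
     (\<Union>i<n. W i) = {..<N}"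

text \<open>Message assignments: x j k is the k-th symbol of message j (extensional).\<close>
definition msg_space :: "'a set \<Rightarrow> nat \<Rightarrow> nat \<Rightarrow> (nat \<Rightarrow> nat \<Rightarrow> 'a) set" where
  "msg_space A N m = {x. \<forall>j k. (j < N \<and> k < m \<longrightarrow> x j k \<in> A) \<and>
                               (\<not> (j < N \<and> k < m) \<longrightarrow> x j k = undefined)}"

text \<open>A valid index code of message length m and codeword length l: encoder E,
observed coordinate sets R i, and decoders D i receiving the observed part of
the codeword and the side information.\<close>
definition valid_index_code ::
  "'a set \<Rightarrow> nat \<Rightarrow> nat \<Rightarrow> (nat \<Rightarrow> nat set) \<Rightarrow> (nat \<Rightarrow> nat set) \<Rightarrow> nat \<Rightarrow> nat \<Rightarrow>
   ((nat \<Rightarrow> nat \<Rightarrow> 'a) \<Rightarrow> (nat \<Rightarrow> 'a)) \<Rightarrow> (nat \<Rightarrow> nat set) \<Rightarrow>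
   (nat \<Rightarrow> (nat \<Rightarrow> 'a) \<Rightarrow> (nat \<Rightarrow> nat \<Rightarrow> 'a) \<Rightarrow> (nat \<Rightarrow> nat \<Rightarrow> 'a)) \<Rightarrow> bool" where
  "valid_index_code A N n W K m l E R D \<longleftrightarrow>
     (\<forall>x\<in>msg_space A N m. \<forall>t<l. E x t \<in> A) \<and>
     (\<forall>i<n. R i \<subseteq> {..<l}) \<and>
     (\<forall>i<n. \<forall>x\<in>msg_space A N m.
        \<forall>j\<in>W i. \<forall>k<m.
          D i (\<lambda>t. if t \<in> R i then E x t else undefined)
              (\<lambda>j' k'. if j' \<in> K i then x j' k' else undefined) j k = x j k)"

definition locality_le :: "nat \<Rightarrow> (nat \<Rightarrow> nat set) \<Rightarrow> nat \<Rightarrow> (nat \<Rightarrow> nat set) \<Rightarrow> real \<Rightarrow> bool" where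
  "locality_le n W m R r \<longleftrightarrow> (\<forall>i<n. real (card (R i)) / (real m * real (card (W i))) \<le> r)"

definition beta_star :: "'a set \<Rightarrow> nat \<Rightarrow> nat \<Rightarrow> (nat \<Rightarrow> nat set) \<Rightarrow> (nat \<Rightarrow> nat set) \<Rightarrow> real \<Rightarrow> real" where
  "beta_star A N n W K r = Inf {real l / real m | m l E R D.
      m \<ge> 1 \<and> valid_index_code A N n W K m l E R D \<and> locality_le n W m R r}"

text \<open>ESUP: one receiver per message j < N, demanding {j} with the side
information of the (unique) receiver of the original problem demanding j.\<close>
definition esup_K :: "nat \<Rightarrow> (nat \<Rightarrow> nat set) \<Rightarrow> (nat \<Rightarrow> nat set) \<Rightarrow> nat \<Rightarrow> nat set" where
  "esup_K n W K j = K (THE i. i < n \<and> j \<in> W i)"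

definition esup_W :: "nat \<Rightarrow> nat set" where
  "esup_W j = {j}"

end

theory Submission
  imports Defs
begin

text \<open>A code for the ESUP is a code for the original problem: receiver \<open>u\<^sub>i\<close> listens to the
union of the coordinates its ESUP receivers listen to, which costs at most \<open>|W\<^sub>i|\<close> times the
per-message locality. Conversely, a code for the original problem serves every ESUP receiver of
message \<open>j \<in> W\<^sub>i\<close> by running the decoder of \<open>u\<^sub>i\<close>, whose locality is relative to \<open>|W\<^sub>i|\<close> messages
and hence at most \<open>max\<^sub>i |W\<^sub>i|\<close> times as large for a single message. The rate sets therefore
nest, and infima reverse the inclusions.\<close>

definition achievable_rates ::
  "'a set \<Rightarrow> nat \<Rightarrow> nat \<Rightarrow> (nat \<Rightarrow> nat set) \<Rightarrow> (nat \<Rightarrow> nat set) \<Rightarrow> real \<Rightarrow> real set" where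
  "achievable_rates A N n W K r = {real l / real m | m l E R D.
      m \<ge> 1 \<and> valid_index_code A N n W K m l E R D \<and> locality_le n W m R r}"

lemma beta_star_eq_Inf_achievable_rates:
  "beta_star A N n W K r = Inf (achievable_rates A N n W K r)"
  unfolding beta_star_def achievable_rates_def ..

lemma achievable_rates_nonneg: "\<rho> \<in> achievable_rates A N n W K r \<Longrightarrow> 0 \<le> \<rho>"
  unfolding achievable_rates_def by auto

lemma beta_star_le_of_achievable_rates_subset:
  assumes "achievable_rates A N n W K r \<subseteq> achievable_rates A' N' n' W' K' r'"
    and "achievable_rates A N n W K r \<noteq> {}"
  shows "beta_star A' N' n' W' K' r' \<le> beta_star A N n W K r"
  unfolding beta_star_eq_Inf_achievable_rates
  using assms by (intro cInf_superset_mono) (auto intro: bdd_belowI achievable_rates_nonneg)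

definition demander :: "nat \<Rightarrow> (nat \<Rightarrow> nat set) \<Rightarrow> nat \<Rightarrow> nat" where
  "demander n W j = (THE i. i < n \<and> j \<in> W i)"

lemma esup_K_eq_demander: "esup_K n W K j = K (demander n W j)"
  unfolding esup_K_def demander_def ..

lemma demander_eq:
  assumes "unicast_problem N n W K" "i < n" "j \<in> W i"
  shows "demander n W j = i"
  unfolding demander_def
proof (rule the_equality)
  fix i' assume "i' < n \<and> j \<in> W i'"
  then show "i' = i"
    using assms unfolding unicast_problem_def by blast
qed (use assms in simp)

lemma demander_demands:
  assumes "unicast_problem N n W K" "j < N"
  shows "demander n W j < n" "j \<in> W (demander n W j)"
proof -
  have "j \<in> (\<Union>i<n. W i)"
    using assms unfolding unicast_problem_def by simp
  then obtain i where "i < n" "j \<in> W i" by blast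
  then show "demander n W j < n" "j \<in> W (demander n W j)"
    by (simp_all add: demander_eq[OF assms(1)])
qed

lemma unicast_problem_demands_finite_nonempty:
  assumes "unicast_problem N n W K" "i < n"
  shows "finite (W i)" "W i \<noteq> {}"
  using assms unfolding unicast_problem_def by (auto intro: finite_subset[of _ "{..<N}"])

lemma esup_unicast_problem:
  assumes "unicast_problem N n W K"
  shows "unicast_problem N N esup_W (esup_K n W K)"
proof -
  have "j \<notin> esup_K n W K j" "esup_K n W K j \<subseteq> {..<N}" if "j < N" for j
    using demander_demands[OF assms that] assms
    unfolding esup_K_eq_demander unicast_problem_def by blast+
  then show ?thesis
    unfolding unicast_problem_def esup_W_def by auto
qed

lemma locality_le_iff_card_le:
  assumes "m \<ge> 1" and "\<And>i. i < n \<Longrightarrow> finite (W i) \<and> W i \<noteq> {}"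
  shows "locality_le n W m R r \<longleftrightarrow>
           (\<forall>i<n. real (card (R i)) \<le> r * real m * real (card (W i)))"
proof -
  have "real m * real (card (W i)) > 0" if "i < n" for i
    using assms(1) assms(2)[OF that] by (simp add: card_gt_0_iff)
  then show ?thesis
    unfolding locality_le_def by (simp add: pos_divide_le_eq mult.assoc)
qed

text \<open>The witness is uncoded transmission with \<open>m = 1\<close>: coordinate \<open>j\<close> of the codeword is
message \<open>j\<close>, and receiver \<open>i\<close> reads exactly the coordinates \<open>W i\<close>.\<close>

lemma uncoded_rate_achievable:
  assumes "unicast_problem N n W K"
  shows "real N \<in> achievable_rates A N n W K 1"
proof -
  define E :: "(nat \<Rightarrow> nat \<Rightarrow> 'a) \<Rightarrow> nat \<Rightarrow> 'a" where "E = (\<lambda>x t. x t 0)"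
  define D :: "nat \<Rightarrow> (nat \<Rightarrow> 'a) \<Rightarrow> (nat \<Rightarrow> nat \<Rightarrow> 'a) \<Rightarrow> nat \<Rightarrow> nat \<Rightarrow> 'a"
    where "D = (\<lambda>i y s j k. y j)"
  have "valid_index_code A N n W K 1 N E W D"
    using assms unfolding valid_index_code_def unicast_problem_def E_def D_def msg_space_def
    by fastforce
  moreover have "locality_le n W 1 W 1"
    using unicast_problem_demands_finite_nonempty[OF assms]
    by (subst locality_le_iff_card_le) auto
  ultimately show ?thesis
    unfolding achievable_rates_def by force
qed

lemma esup_code_to_unicast_code:
  assumes up: "unicast_problem N n W K" and m: "m \<ge> 1"
    and code: "valid_index_code A N N esup_W (esup_K n W K) m l E R D"
    and loc: "locality_le N esup_W m R r"
  obtains R' D' where "valid_index_code A N n W K m l E R' D'" "locality_le n W m R' r"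
proof
  define R' where "R' = (\<lambda>i. \<Union>j\<in>W i. R j)"
  define D' :: "nat \<Rightarrow> (nat \<Rightarrow> _) \<Rightarrow> (nat \<Rightarrow> nat \<Rightarrow> _) \<Rightarrow> nat \<Rightarrow> nat \<Rightarrow> _"
    where "D' = (\<lambda>i y s j. D j (\<lambda>t. if t \<in> R j then y t else undefined) s j)"
  have W_sub: "W i \<subseteq> {..<N}" if "i < n" for i
    using up that unfolding unicast_problem_def by blast
  show "valid_index_code A N n W K m l E R' D'"
    unfolding valid_index_code_def
  proof (intro conjI allI impI ballI)
    show "E x t \<in> A" if "x \<in> msg_space A N m" "t < l" for x t
      using code that unfolding valid_index_code_def by blast
    show "R' i \<subseteq> {..<l}" if "i < n" for i
      using code W_sub[OF that] unfolding valid_index_code_def R'_def by blast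
  next
    fix i x j k assume i: "i < n" and x: "x \<in> msg_space A N m" and j: "j \<in> W i" and "k < m"
    have "j < N" using W_sub[OF i] j by blast
    then have "D j (\<lambda>t. if t \<in> R j then E x t else undefined)
                 (\<lambda>j' k'. if j' \<in> K i then x j' k' else undefined) j k = x j k"
      using code x \<open>k < m\<close> demander_eq[OF up i j]
      unfolding valid_index_code_def esup_W_def esup_K_eq_demander by auto
    moreover have "R j \<subseteq> R' i" unfolding R'_def using j by blast
    ultimately show "D' i (\<lambda>t. if t \<in> R' i then E x t else undefined)
                       (\<lambda>j' k'. if j' \<in> K i then x j' k' else undefined) j k = x j k"
      unfolding D'_def by (simp add: subset_iff if_distrib cong: if_cong)
  qed
  have card_R: "real (card (R j)) \<le> r * real m" if "j < N" for j
    using loc that m esup_unicast_problem[OF up]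
    by (subst (asm) locality_le_iff_card_le)
       (auto dest: unicast_problem_demands_finite_nonempty simp: esup_W_def)
  have "real (card (R' i)) \<le> r * real m * real (card (W i))" if i: "i < n" for i
  proof -
    have "real (card (R' i)) \<le> (\<Sum>j\<in>W i. real (card (R j)))"
      unfolding R'_def of_nat_sum[symmetric] of_nat_le_iff
      using unicast_problem_demands_finite_nonempty(1)[OF up i] by (rule card_UN_le)
    also have "\<dots> \<le> (\<Sum>j\<in>W i. r * real m)"
      using card_R W_sub[OF i] by (intro sum_mono) blast
    finally show ?thesis by (simp add: mult.commute)
  qed
  then show "locality_le n W m R' r"
    using m unicast_problem_demands_finite_nonempty[OF up]
    by (subst locality_le_iff_card_le) auto
qed

lemma unicast_code_to_esup_code:
  assumes up: "unicast_problem N n W K" and m: "m \<ge> 1" and r: "r \<ge> 0"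
    and code: "valid_index_code A N n W K m l E R D"
    and loc: "locality_le n W m R r"
  obtains R' D' where "valid_index_code A N N esup_W (esup_K n W K) m l E R' D'"
    "locality_le N esup_W m R' (r * real (Max ((\<lambda>i. card (W i)) ` {..<n})))"
proof
  define R' where "R' = (\<lambda>j. R (demander n W j))"
  define D' where "D' = (\<lambda>j. D (demander n W j))"
  note demands = demander_demands[OF up]
  show "valid_index_code A N N esup_W (esup_K n W K) m l E R' D'"
    using code demands unfolding valid_index_code_def esup_W_def esup_K_eq_demander R'_def D'_def
    by auto
  have "real (card (R' j)) \<le> r * real m * real (Max ((\<lambda>i. card (W i)) ` {..<n}))"
    if j: "j < N" for j
  proof -
    let ?i = "demander n W j"
    have "real (card (R' j)) \<le> r * real m * real (card (W ?i))"
      using loc m demands(1)[OF j] unicast_problem_demands_finite_nonempty[OF up]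
      unfolding R'_def by (subst (asm) locality_le_iff_card_le) auto
    also have "\<dots> \<le> r * real m * real (Max ((\<lambda>i. card (W i)) ` {..<n}))"
      using r demands(1)[OF j] by (intro mult_left_mono) auto
    finally show ?thesis .
  qed
  then show "locality_le N esup_W m R' (r * real (Max ((\<lambda>i. card (W i)) ` {..<n})))"
    using m by (subst locality_le_iff_card_le) (auto simp: esup_W_def mult_ac)
qed

lemma esup_rates_subset_rates:
  assumes "unicast_problem N n W K"
  shows "achievable_rates A N N esup_W (esup_K n W K) r \<subseteq> achievable_rates A N n W K r"
proof
  fix \<rho> assume "\<rho> \<in> achievable_rates A N N esup_W (esup_K n W K) r"
  then obtain m l E R D where "\<rho> = real l / real m" "m \<ge> 1"
    "valid_index_code A N N esup_W (esup_K n W K) m l E R D" "locality_le N esup_W m R r"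
    unfolding achievable_rates_def by blast
  moreover obtain R' D' where "valid_index_code A N n W K m l E R' D'" "locality_le n W m R' r"
    using esup_code_to_unicast_code[OF assms calculation(2-4)] .
  ultimately show "\<rho> \<in> achievable_rates A N n W K r"
    unfolding achievable_rates_def by blast
qed

lemma rates_subset_esup_rates:
  assumes "unicast_problem N n W K" and "r \<ge> 0"
  shows "achievable_rates A N n W K r \<subseteq>
           achievable_rates A N N esup_W (esup_K n W K) (r * real (Max ((\<lambda>i. card (W i)) ` {..<n})))"
proof
  fix \<rho> assume "\<rho> \<in> achievable_rates A N n W K r"
  then obtain m l E R D where "\<rho> = real l / real m" "m \<ge> 1"
    "valid_index_code A N n W K m l E R D" "locality_le n W m R r"
    unfolding achievable_rates_def by blast
  moreover obtain R' D' where "valid_index_code A N N esup_W (esup_K n W K) m l E R' D'"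
    "locality_le N esup_W m R' (r * real (Max ((\<lambda>i. card (W i)) ` {..<n})))"
    using unicast_code_to_esup_code[OF assms(1) calculation(2) assms(2) calculation(3-4)] .
  ultimately show "\<rho> \<in> achievable_rates A N N esup_W (esup_K n W K)
                    (r * real (Max ((\<lambda>i. card (W i)) ` {..<n})))"
    unfolding achievable_rates_def by blast
qed

theorem theorem2:
  fixes A :: "'a set" and N n :: nat and W K :: "nat \<Rightarrow> nat set"
  assumes "finite A" and "A \<noteq> {}"
    and "unicast_problem N n W K"
  shows "beta_star A N N esup_W (esup_K n W K) (real (Max ((\<lambda>i. card (W i)) ` {..<n})))
           \<le> beta_star A N n W K 1
       \<and> beta_star A N n W K 1 \<le> beta_star A N N esup_W (esup_K n W K) 1"
proof
  have esup_rates_nonempty: "achievable_rates A N N esup_W (esup_K n W K) 1 \<noteq> {}"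
    using uncoded_rate_achievable[OF esup_unicast_problem[OF assms(3)]] by blast
  then have "achievable_rates A N n W K 1 \<noteq> {}"
    using esup_rates_subset_rates[OF assms(3)] by blast
  then show "beta_star A N N esup_W (esup_K n W K) (real (Max ((\<lambda>i. card (W i)) ` {..<n})))
               \<le> beta_star A N n W K 1"
    using rates_subset_esup_rates[OF assms(3), of 1]
    by (intro beta_star_le_of_achievable_rates_subset) simp_all
  show "beta_star A N n W K 1 \<le> beta_star A N N esup_W (esup_K n W K) 1"
    using esup_rates_subset_rates[OF assms(3)] esup_rates_nonempty
    by (rule beta_star_le_of_achievable_rates_subset)
qed

end
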